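(* Let $\mathfrak X=(\mathbb R,d_{\rm e},\mu)$, where $d_{\rm e}$ is the Euclidean metric and $\mu$ is a Borel measure such that every open interval (ball) has finite strictly positive measure. Then the noncentered maximal operator $\mathcal M_{\mathfrak X}$ possesses the dichotomy property.
   Context: $L^1_{\rm loc}(\mu)$: functions integrable on every open ball. $\mathcal Mf(x)=\sup_{B\ni x}\mu(B)^{-1}\int_B|f|d\mu$ over open balls containing $x$. $\mathcal M$ possesses the dichotomy property if for every $f\in L^1_{\rm loc}(\mu)$ either $\mu(\{\mathcal Mf=\infty\})=0$ or $\mathcal Mf(x)=\infty$ for all $x\in X$. *)

theory Defs
  imports "HOL-Analysis.Analysis"
begin

definition loc_integrable :: "'a::metric_space measure \<Rightarrow> ('a \<Rightarrow> real) \<Rightarrow> bool" where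
  "loc_integrable M f \<longleftrightarrow> (\<forall>c r. 0 < r \<longrightarrow> set_integrable M (ball c r) f)"

definition max_op :: "'a::metric_space measure \<Rightarrow> ('a \<Rightarrow> real) \<Rightarrow> 'a \<Rightarrow> ennreal" where
  "max_op M f x = (SUP B \<in> {ball c r | c r. 0 < r \<and> x \<in> ball c r}.
       (\<integral>\<^sup>+ y \<in> B. ennreal \<bar>f y\<bar> \<partial>M) / emeasure M B)"

definition dichotomy_property :: "'a::metric_space measure \<Rightarrow> bool" where
  "dichotomy_property M \<longleftrightarrow>
     (\<forall>f. loc_integrable M f \<longrightarrow>
        emeasure M {x \<in> space M. max_op M f x = \<infinity>} = 0 \<or> (\<forall>x. max_op M f x = \<infinity>))"

end

theory Submission
  imports Defs
begin

(* Fix y with Mf(y) < \<infinity>. A ball through x that leaves a bounded window around x and y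
   contains an interval of length 1 next to x, so its measure is bounded below; enlarging it to
   an interval containing y adds at most the measure of the window, hence its average of |f| is
   at most a constant multiple of Mf(y). Consequently Mf(x) = \<infinity> can only be caused by balls
   inside the window with arbitrarily large averages. On the line every finite cover by intervals
   has a subcover in which no point lies in three intervals, which together with inner regularity
   gives the weak-type bound c \<mu>{heavy balls} \<le> 2 \<integral>|f|; letting c \<rightarrow> \<infinity> shows that the points
   of the window where Mf = \<infinity> form a null set. *)

lemma interval_subset_Un_intervals:
  fixes x :: real
  assumes "a' < x" "x < b'" "a'' < x" "x < b''" "min a' a'' \<le> a" "b \<le> max b' b''"
  shows "{a<..<b} \<subseteq> {a'<..<b'} \<union> {a''<..<b''}"
  using assms by auto

lemma ball_subset_Un_of_three_balls:
  fixes x :: real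
  assumes "x \<in> ball c1 r1" "x \<in> ball c2 r2" "x \<in> ball c3 r3"
  shows "ball c1 r1 \<subseteq> ball c2 r2 \<union> ball c3 r3 \<or> ball c2 r2 \<subseteq> ball c1 r1 \<union> ball c3 r3
     \<or> ball c3 r3 \<subseteq> ball c1 r1 \<union> ball c2 r2"
  using assms
    interval_subset_Un_intervals[of "c2 - r2" x "c2 + r2" "c3 - r3" "c3 + r3" "c1 - r1" "c1 + r1"]
    interval_subset_Un_intervals[of "c1 - r1" x "c1 + r1" "c3 - r3" "c3 + r3" "c2 - r2" "c2 + r2"]
    interval_subset_Un_intervals[of "c1 - r1" x "c1 + r1" "c2 - r2" "c2 + r2" "c3 - r3" "c3 + r3"]
  \<comment> \<open>the interval reaching neither furthest left nor furthest right is covered by the other two\<close>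
  unfolding ball_eq_greaterThanLessThan greaterThanLessThan_iff min_def max_def
  by (smt (verit))

lemma finite_ball_cover_overlap_le_2:
  fixes F :: "real set set"
  assumes "finite F" "\<forall>B\<in>F. \<exists>c r. B = ball c r" "K \<subseteq> \<Union>F"
  obtains G where "G \<subseteq> F" "K \<subseteq> \<Union>G" "\<And>x. card {B\<in>G. x \<in> B} \<le> 2"
proof -
  have "\<exists>G. (G \<subseteq> F \<and> K \<subseteq> \<Union>G) \<and> (\<forall>H. H \<subseteq> F \<and> K \<subseteq> \<Union>H \<longrightarrow> card G \<le> card H)"
    by (rule ex_has_least_nat[where k = F]) (use assms(3) in simp)
  then obtain G where G: "G \<subseteq> F" "K \<subseteq> \<Union>G"
    and G_least: "\<forall>H. H \<subseteq> F \<and> K \<subseteq> \<Union>H \<longrightarrow> card G \<le> card H"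
    by auto
  have "finite G"
    using G(1) assms(1) finite_subset by blast
  have irredundant: False if "B \<in> G" "B' \<in> G - {B}" "B'' \<in> G - {B}" "B \<subseteq> B' \<union> B''" for B B' B''
  proof -
    have "K \<subseteq> \<Union>(G - {B})"
      using G(2) that by blast
    then have "card G \<le> card (G - {B})"
      using G(1) by (intro G_least[rule_format]) blast
    then show False
      using card_Diff1_less[OF \<open>finite G\<close> \<open>B \<in> G\<close>] by simp
  qed
  have "card {B\<in>G. x \<in> B} \<le> 2" for x
  proof (rule ccontr)
    assume "\<not> card {B\<in>G. x \<in> B} \<le> 2"
    then have "3 \<le> card {B\<in>G. x \<in> B}"
      by simp
    then obtain T where "T \<subseteq> {B\<in>G. x \<in> B}" "card T = 3"
      by (rule obtain_subset_with_card_n)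
    then obtain B1 B2 B3 where B: "B1 \<in> G" "B2 \<in> G" "B3 \<in> G" "x \<in> B1" "x \<in> B2" "x \<in> B3"
      "B1 \<noteq> B2" "B1 \<noteq> B3" "B2 \<noteq> B3"
      unfolding card_3_iff by auto
    obtain c1 r1 c2 r2 c3 r3 where "B1 = ball c1 r1" "B2 = ball c2 r2" "B3 = ball c3 r3"
      using G(1) assms(2) B(1-3) by (meson subsetD)
    then consider "B1 \<subseteq> B2 \<union> B3" | "B2 \<subseteq> B1 \<union> B3" | "B3 \<subseteq> B1 \<union> B2"
      using ball_subset_Un_of_three_balls B(4-6) by blast
    then show False
      using irredundant[of B1 B2 B3] irredundant[of B2 B1 B3] irredundant[of B3 B1 B2] B by cases auto
  qed
  then show thesis
    using that G by blast
qed

lemma adjacent_unit_interval_subset_ball: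
  fixes x :: real
  assumes "x \<in> ball c r" "\<not> ball c r \<subseteq> ball 0 R" "\<bar>x\<bar> + 1 \<le> R"
  shows "ball (x + 1/2) (1/2) \<subseteq> ball c r \<or> ball (x - 1/2) (1/2) \<subseteq> ball c r"
proof -
  obtain z where "z \<in> ball c r" "z \<notin> ball 0 R"
    using assms(2) by blast
  then have "x + 1 \<le> c + r \<or> c - r \<le> x - 1"
    using assms(1,3) by (auto simp: ball_eq_greaterThanLessThan dist_real_def)
  then show ?thesis
    using assms(1) by (auto simp: ball_eq_greaterThanLessThan)
qed

lemma ball_extend_to_point:
  fixes x y :: real
  assumes "x \<in> ball c r"
  obtains d s where "0 < s" "y \<in> ball d s" "ball c r \<subseteq> ball d s"
    "ball d s \<subseteq> ball c r \<union> ball 0 (\<bar>x\<bar> + \<bar>y\<bar> + 1)"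
proof
  let ?lo = "min (c - r) (y - 1)" and ?hi = "max (c + r) (y + 1)"
  have hull: "ball ((?lo + ?hi) / 2) ((?hi - ?lo) / 2) = {?lo<..<?hi}"
    by (simp add: ball_eq_greaterThanLessThan field_simps)
  show "0 < (?hi - ?lo) / 2"
    by simp
  show "y \<in> ball ((?lo + ?hi) / 2) ((?hi - ?lo) / 2)"
    unfolding hull by (simp add: min_less_iff_disj less_max_iff_disj)
  show "ball c r \<subseteq> ball ((?lo + ?hi) / 2) ((?hi - ?lo) / 2)"
    unfolding hull by (auto simp: ball_eq_greaterThanLessThan)
  show "ball ((?lo + ?hi) / 2) ((?hi - ?lo) / 2) \<subseteq> ball c r \<union> ball 0 (\<bar>x\<bar> + \<bar>y\<bar> + 1)"
    unfolding hull using assms by (auto simp: ball_eq_greaterThanLessThan dist_real_def)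
qed

lemma emeasure_Union_le_bounded_overlap:
  fixes G :: "'a set set" and g :: "'a \<Rightarrow> ennreal"
  assumes "finite G" "G \<subseteq> sets M" "g \<in> borel_measurable M"
    and "\<And>B. B \<in> G \<Longrightarrow> c * emeasure M B \<le> (\<integral>\<^sup>+y\<in>B. g y \<partial>M)"
    and "\<And>x. card {B\<in>G. x \<in> B} \<le> k"
  shows "c * emeasure M (\<Union>G) \<le> of_nat k * (\<integral>\<^sup>+y. g y \<partial>M)"
proof -
  have overlap: "(\<Sum>B\<in>G. g y * indicator B y) \<le> of_nat k * g y" for y
  proof -
    have "(\<Sum>B\<in>G. g y * indicator B y) = (\<Sum>B\<in>G. if y \<in> B then g y else 0)"
      by (intro sum.cong) (auto simp: indicator_def)
    also have "\<dots> = (\<Sum>B\<in>{B\<in>G. y \<in> B}. g y)"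
      using assms(1) by (rule sum.inter_filter[symmetric])
    also have "\<dots> = of_nat (card {B\<in>G. y \<in> B}) * g y"
      by (rule sum_constant)
    also have "\<dots> \<le> of_nat k * g y"
      using assms(5) by (intro mult_right_mono) auto
    finally show ?thesis .
  qed
  have "c * emeasure M (\<Union>G) \<le> c * (\<Sum>B\<in>G. emeasure M B)"
    using emeasure_subadditive_finite[OF assms(1), of "\<lambda>B. B" M] assms(2)
    by (intro mult_left_mono) auto
  also have "\<dots> \<le> (\<Sum>B\<in>G. \<integral>\<^sup>+y. g y * indicator B y \<partial>M)"
    unfolding sum_distrib_left using assms(4) by (intro sum_mono) auto
  also have "\<dots> = (\<integral>\<^sup>+y. (\<Sum>B\<in>G. g y * indicator B y) \<partial>M)"
    using assms(2,3) by (intro nn_integral_sum[symmetric]) auto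
  also have "\<dots> \<le> (\<integral>\<^sup>+y. of_nat k * g y \<partial>M)"
    by (intro nn_integral_mono overlap)
  also have "\<dots> = of_nat k * (\<integral>\<^sup>+y. g y \<partial>M)"
    using assms(3) by (simp add: nn_integral_cmult)
  finally show ?thesis .
qed

lemma inner_regular_within_finite:
  fixes M :: "'a::{second_countable_topology, complete_space} measure"
  assumes "sets M = sets borel" "W \<in> sets M" "emeasure M W \<noteq> \<infinity>" "U \<in> sets M" "U \<subseteq> W"
  shows "emeasure M U = (SUP K \<in> {K. K \<subseteq> U \<and> compact K}. emeasure M K)"
proof -
  let ?MW = "density M (indicator W)"
  have sets_MW: "sets ?MW = sets borel"
    using assms(1) by simp
  have MW_eq: "emeasure ?MW A = emeasure M (W \<inter> A)" if "A \<in> sets borel" for A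
    using emeasure_restricted[OF assms(2)] that assms(1) by simp
  have "emeasure ?MW (space ?MW) \<noteq> \<infinity>"
    using MW_eq[of UNIV] assms(3) sets_MW by (metis inf_top.right_neutral sets.top sets_eq_imp_space_eq space_borel)
  then have "emeasure ?MW U = (SUP K \<in> {K. K \<subseteq> U \<and> compact K}. emeasure ?MW K)"
    using assms(1,4) sets_MW by (intro inner_regular) auto
  moreover have "emeasure ?MW K = emeasure M K" if "K \<subseteq> U" "compact K" for K
    using MW_eq[of K] that assms(5) by (simp add: compact_imp_closed Int_absorb1 order_trans)
  ultimately show ?thesis
    using MW_eq[of U] assms(1,4,5) by (simp add: Int_absorb1)
qed

lemma weak_type_maximal_balls:
  fixes M :: "real measure" and g :: "real \<Rightarrow> ennreal"
  assumes "sets M = sets borel" "W \<in> sets M" "emeasure M W \<noteq> \<infinity>" "g \<in> borel_measurable M"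
  shows "c * emeasure M (\<Union>{ball x r | x r. ball x r \<subseteq> W \<and>
      c * emeasure M (ball x r) < (\<integral>\<^sup>+y\<in>ball x r. g y \<partial>M)}) \<le> 2 * (\<integral>\<^sup>+y. g y \<partial>M)"
    (is "c * emeasure M (\<Union>?H) \<le> _")
proof -
  have H_open: "open B" if "B \<in> ?H" for B
    using that by auto
  then have "open (\<Union>?H)"
    by (intro open_Union) blast
  then have U_sets: "\<Union>?H \<in> sets M"
    using assms(1) by simp
  have compact_bound: "c * emeasure M K \<le> 2 * (\<integral>\<^sup>+y. g y \<partial>M)" if "K \<subseteq> \<Union>?H" "compact K" for K
  proof -
    obtain T where T: "T \<subseteq> ?H" "finite T" "K \<subseteq> \<Union>T"
      by (rule compactE[OF \<open>compact K\<close> \<open>K \<subseteq> \<Union>?H\<close> H_open])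
    have T_balls: "\<forall>B\<in>T. \<exists>x r. B = ball x r"
      using T(1) by blast
    obtain G where G: "G \<subseteq> T" "K \<subseteq> \<Union>G" "\<And>x. card {B\<in>G. x \<in> B} \<le> 2"
      using finite_ball_cover_overlap_le_2[OF T(2) T_balls T(3)] by blast
    have "finite G"
      using G(1) T(2) by (rule finite_subset)
    have G_sets: "G \<subseteq> sets M"
      using G(1) T(1) H_open assms(1) by auto
    have "c * emeasure M K \<le> c * emeasure M (\<Union>G)"
      using G(2) G_sets \<open>finite G\<close> by (intro mult_left_mono emeasure_mono) auto
    also have "\<dots> \<le> of_nat 2 * (\<integral>\<^sup>+y. g y \<partial>M)"
    proof (rule emeasure_Union_le_bounded_overlap[OF \<open>finite G\<close> G_sets assms(4)])
      show "c * emeasure M B \<le> (\<integral>\<^sup>+y\<in>B. g y \<partial>M)" if "B \<in> G" for B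
        using that G(1) T(1) by (auto intro: less_imp_le)
    qed (rule G(3))
    finally show ?thesis
      by simp
  qed
  have "\<Union>?H \<subseteq> W"
    by blast
  then have "c * emeasure M (\<Union>?H) = c * (SUP K \<in> {K. K \<subseteq> \<Union>?H \<and> compact K}. emeasure M K)"
    using inner_regular_within_finite[OF assms(1-3) U_sets] by simp
  also have "\<dots> = (SUP K \<in> {K. K \<subseteq> \<Union>?H \<and> compact K}. c * emeasure M K)"
    by (rule SUP_mult_left_ennreal)
  also have "\<dots> \<le> 2 * (\<integral>\<^sup>+y. g y \<partial>M)"
    using compact_bound by (intro SUP_least) auto
  finally show ?thesis .
qed

lemma ennreal_eq_0_if_multiples_bounded:
  fixes a b :: ennreal
  assumes "\<And>k. of_nat k * a \<le> b" "b \<noteq> \<infinity>"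
  shows "a = 0"
proof (rule ccontr)
  assume "a \<noteq> 0"
  have "a \<le> b"
    using assms(1)[of 1] by simp
  also have "b < \<infinity>"
    using assms(2) by (simp add: less_top[symmetric])
  finally have "a < \<infinity>" .
  have "b / a < \<infinity>"
    using \<open>a \<noteq> 0\<close> assms(2) by (simp add: ennreal_divide_eq_top_iff less_top[symmetric])
  then obtain k where "b / a < of_nat k"
    using ennreal_Ex_less_of_nat by auto
  then have "b < of_nat k * a"
    using \<open>a \<noteq> 0\<close> \<open>a < \<infinity>\<close> by (simp add: divide_less_ennreal)
  then show False
    using assms(1)[of k] by simp
qed

lemma loc_integrable_ball:
  assumes "loc_integrable M f" "0 < r"
  shows "(\<lambda>y. ennreal \<bar>f y\<bar> * indicator (ball c r) y) \<in> borel_measurable M"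
    and "(\<integral>\<^sup>+y\<in>ball c r. ennreal \<bar>f y\<bar> \<partial>M) \<noteq> \<infinity>"
proof -
  have integrable: "integrable M (\<lambda>y. indicator (ball c r) y *\<^sub>R f y)"
    using assms unfolding loc_integrable_def set_integrable_def by blast
  have eq: "(\<lambda>y. ennreal \<bar>f y\<bar> * indicator (ball c r) y) = (\<lambda>y. ennreal (norm (indicator (ball c r) y *\<^sub>R f y)))"
    by (auto simp: indicator_def)
  show "(\<lambda>y. ennreal \<bar>f y\<bar> * indicator (ball c r) y) \<in> borel_measurable M"
    unfolding eq using integrable by measurable
  show "(\<integral>\<^sup>+y\<in>ball c r. ennreal \<bar>f y\<bar> \<partial>M) \<noteq> \<infinity>"
    unfolding eq using integrable by (simp add: integrable_iff_bounded less_top)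
qed

lemma set_nn_integral_le_max_op:
  assumes "0 < r" "x \<in> ball c r" "emeasure M (ball c r) \<noteq> 0" "emeasure M (ball c r) \<noteq> \<infinity>"
  shows "(\<integral>\<^sup>+z\<in>ball c r. ennreal \<bar>f z\<bar> \<partial>M) \<le> max_op M f x * emeasure M (ball c r)"
proof -
  have "(\<integral>\<^sup>+z\<in>ball c r. ennreal \<bar>f z\<bar> \<partial>M) / emeasure M (ball c r) \<le> max_op M f x"
    unfolding max_op_def using assms(1,2) by (intro SUP_upper) blast
  then have "(\<integral>\<^sup>+z\<in>ball c r. ennreal \<bar>f z\<bar> \<partial>M) / emeasure M (ball c r) * emeasure M (ball c r)
      \<le> max_op M f x * emeasure M (ball c r)"
    by (rule mult_right_mono) simp
  then show ?thesis
    using assms(3,4) by (simp add: ennreal_divide_times top.not_eq_extremum)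
qed

lemma max_op_bounds_average_on_large_balls:
  fixes M :: "real measure"
  assumes sets_M: "sets M = sets borel"
    and balls: "\<And>c r. 0 < r \<Longrightarrow> 0 < emeasure M (ball c r) \<and> emeasure M (ball c r) < \<infinity>"
    and finite_y: "max_op M f y \<noteq> \<infinity>"
  obtains L where "L \<noteq> \<infinity>"
    "\<And>c r. x \<in> ball c r \<Longrightarrow> \<not> ball c r \<subseteq> ball 0 (\<bar>x\<bar> + \<bar>y\<bar> + 1) \<Longrightarrow>
       (\<integral>\<^sup>+z\<in>ball c r. ennreal \<bar>f z\<bar> \<partial>M) \<le> L * emeasure M (ball c r)"
proof
  let ?W = "ball (0::real) (\<bar>x\<bar> + \<bar>y\<bar> + 1)"
  define C where "C = emeasure M ?W"
  define \<delta> where "\<delta> = min (emeasure M (ball (x + 1/2) (1/2))) (emeasure M (ball (x - 1/2) (1/2)))"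
  have "0 < \<bar>x\<bar> + \<bar>y\<bar> + 1"
    by (intro add_nonneg_pos) auto
  then have "C \<noteq> \<infinity>"
    unfolding C_def using balls[of _ 0] by fastforce
  have "\<delta> \<noteq> 0" "\<delta> \<noteq> \<infinity>"
    unfolding \<delta>_def using balls[of "1/2" "x + 1/2"] balls[of "1/2" "x - 1/2"] by (auto simp: min_def)
  show "max_op M f y * (1 + C / \<delta>) \<noteq> \<infinity>"
    using finite_y \<open>C \<noteq> \<infinity>\<close> \<open>\<delta> \<noteq> 0\<close> by (simp add: ennreal_mult_eq_top_iff ennreal_divide_eq_top_iff)
  fix c r
  assume x: "x \<in> ball c r" and large: "\<not> ball c r \<subseteq> ?W"
  let ?B = "ball c r"
  have "ball (x + 1/2) (1/2) \<subseteq> ?B \<or> ball (x - 1/2) (1/2) \<subseteq> ?B"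
    by (rule adjacent_unit_interval_subset_ball[OF x large]) simp
  then have "\<delta> \<le> emeasure M ?B"
    using emeasure_mono[of _ ?B M] sets_M by (auto simp: \<delta>_def intro: min.coboundedI1 min.coboundedI2)
  then have "1 \<le> emeasure M ?B / \<delta>"
    using \<open>\<delta> \<noteq> 0\<close> \<open>\<delta> \<noteq> \<infinity>\<close> divide_right_mono_ennreal[of \<delta> "emeasure M ?B" \<delta>]
    by (simp add: top.not_eq_extremum)
  then have C_le: "C \<le> C / \<delta> * emeasure M ?B"
    using mult_left_mono[of 1 "emeasure M ?B / \<delta>" C] by (simp add: ennreal_divide_times mult.commute)
  obtain d s where D: "0 < s" "y \<in> ball d s" "?B \<subseteq> ball d s" "ball d s \<subseteq> ?B \<union> ?W"
    by (rule ball_extend_to_point[OF x])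
  have "(\<integral>\<^sup>+z\<in>?B. ennreal \<bar>f z\<bar> \<partial>M) \<le> (\<integral>\<^sup>+z\<in>ball d s. ennreal \<bar>f z\<bar> \<partial>M)"
    using D(3) by (intro nn_integral_mono mult_left_mono) (auto simp: indicator_def)
  also have "\<dots> \<le> max_op M f y * emeasure M (ball d s)"
    using D(1,2) balls[OF D(1), of d] by (intro set_nn_integral_le_max_op) auto
  also have "\<dots> \<le> max_op M f y * (emeasure M ?B + C)"
  proof -
    have "emeasure M (ball d s) \<le> emeasure M (?B \<union> ?W)"
      using D(4) sets_M by (intro emeasure_mono) auto
    also have "\<dots> \<le> emeasure M ?B + C"
      unfolding C_def using sets_M by (intro emeasure_subadditive) auto
    finally show ?thesis
      by (rule mult_left_mono) simp
  qed
  also have "\<dots> \<le> max_op M f y * (1 + C / \<delta>) * emeasure M ?B"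
    using C_le by (simp add: mult.assoc distrib_right add_left_mono mult_left_mono)
  finally show "(\<integral>\<^sup>+z\<in>?B. ennreal \<bar>f z\<bar> \<partial>M) \<le> max_op M f y * (1 + C / \<delta>) * emeasure M ?B" .
qed

lemma max_op_infinite_imp_heavy_ball:
  fixes M :: "real measure"
  assumes sets_M: "sets M = sets borel"
    and balls: "\<And>c r. 0 < r \<Longrightarrow> 0 < emeasure M (ball c r) \<and> emeasure M (ball c r) < \<infinity>"
    and finite_y: "max_op M f y \<noteq> \<infinity>" and infinite_x: "max_op M f x = \<infinity>" and "t \<noteq> \<infinity>"
  obtains c r where "x \<in> ball c r" "ball c r \<subseteq> ball 0 (\<bar>x\<bar> + \<bar>y\<bar> + 1)"
    "t * emeasure M (ball c r) < (\<integral>\<^sup>+z\<in>ball c r. ennreal \<bar>f z\<bar> \<partial>M)"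
proof -
  obtain L where "L \<noteq> \<infinity>" and large_bound:
    "\<And>c r. x \<in> ball c r \<Longrightarrow> \<not> ball c r \<subseteq> ball 0 (\<bar>x\<bar> + \<bar>y\<bar> + 1) \<Longrightarrow>
       (\<integral>\<^sup>+z\<in>ball c r. ennreal \<bar>f z\<bar> \<partial>M) \<le> L * emeasure M (ball c r)"
    using max_op_bounds_average_on_large_balls[OF sets_M balls finite_y, where x = x] by blast
  have "max t L < max_op M f x"
    using infinite_x \<open>t \<noteq> \<infinity>\<close> \<open>L \<noteq> \<infinity>\<close> by (simp add: top.not_eq_extremum)
  then obtain B where "B \<in> {ball c r | c r. 0 < r \<and> x \<in> ball c r}"
    and above: "max t L < (\<integral>\<^sup>+z\<in>B. ennreal \<bar>f z\<bar> \<partial>M) / emeasure M B"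
    unfolding max_op_def less_SUP_iff by blast
  then obtain c r where B: "B = ball c r" "0 < r" "x \<in> ball c r"
    by blast
  have "0 < emeasure M B" "emeasure M B < \<infinity>"
    using balls[OF B(2), of c] B(1) by auto
  then have "max t L * emeasure M B < (\<integral>\<^sup>+z\<in>B. ennreal \<bar>f z\<bar> \<partial>M) / emeasure M B * emeasure M B"
    using above by (intro ennreal_mult_strict_right_mono) simp_all
  then have heavy: "max t L * emeasure M B < (\<integral>\<^sup>+z\<in>B. ennreal \<bar>f z\<bar> \<partial>M)"
    using \<open>0 < emeasure M B\<close> \<open>emeasure M B < \<infinity>\<close> by (simp add: ennreal_divide_times)
  have "B \<subseteq> ball 0 (\<bar>x\<bar> + \<bar>y\<bar> + 1)"
  proof (rule ccontr)
    assume "\<not> B \<subseteq> ball 0 (\<bar>x\<bar> + \<bar>y\<bar> + 1)"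
    then have "(\<integral>\<^sup>+z\<in>B. ennreal \<bar>f z\<bar> \<partial>M) \<le> L * emeasure M B"
      unfolding B(1) by (rule large_bound[OF B(3)])
    also have "\<dots> \<le> max t L * emeasure M B"
      by (intro mult_right_mono) auto
    finally show False
      using heavy by simp
  qed
  moreover have "t * emeasure M B < (\<integral>\<^sup>+z\<in>B. ennreal \<bar>f z\<bar> \<partial>M)"
    by (intro le_less_trans[OF _ heavy] mult_right_mono) auto
  ultimately show thesis
    using that B(1,3) by blast
qed

lemma Inter_heavy_balls_null:
  fixes M :: "real measure" and g :: "real \<Rightarrow> ennreal"
  assumes "sets M = sets borel" "W \<in> sets M" "emeasure M W \<noteq> \<infinity>"
    and "g \<in> borel_measurable M" "(\<integral>\<^sup>+y. g y \<partial>M) \<noteq> \<infinity>"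
  shows "(\<Inter>k::nat. \<Union>{ball c r | c r. ball c r \<subseteq> W \<and>
      of_nat k * emeasure M (ball c r) < (\<integral>\<^sup>+y\<in>ball c r. g y \<partial>M)}) \<in> null_sets M"
    (is "(\<Inter>k. \<Union>(?H k)) \<in> _")
proof -
  have "open (\<Union>(?H k))" for k
    by (intro open_Union) blast
  then have sets_H: "\<Union>(?H k) \<in> sets M" for k
    using assms(1) by simp
  have "of_nat k * emeasure M (\<Inter>k. \<Union>(?H k)) \<le> 2 * (\<integral>\<^sup>+y. g y \<partial>M)" for k
  proof -
    have "of_nat k * emeasure M (\<Inter>k. \<Union>(?H k)) \<le> of_nat k * emeasure M (\<Union>(?H k))"
      using sets_H by (intro mult_left_mono emeasure_mono) auto
    also have "\<dots> \<le> 2 * (\<integral>\<^sup>+y. g y \<partial>M)"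
      by (rule weak_type_maximal_balls[OF assms(1-4)])
    finally show ?thesis .
  qed
  then have "emeasure M (\<Inter>k. \<Union>(?H k)) = 0"
    by (rule ennreal_eq_0_if_multiples_bounded) (use assms(5) in \<open>simp add: ennreal_mult_eq_top_iff\<close>)
  then show ?thesis
    using sets_H by auto
qed

lemma max_op_finite_AE_on_ball:
  fixes M :: "real measure" and n :: nat
  assumes sets_M: "sets M = sets borel"
    and balls: "\<And>c r. 0 < r \<Longrightarrow> 0 < emeasure M (ball c r) \<and> emeasure M (ball c r) < \<infinity>"
    and "loc_integrable M f" and finite_y: "max_op M f y \<noteq> \<infinity>"
  shows "AE x in M. \<bar>x\<bar> < n \<longrightarrow> max_op M f x \<noteq> \<infinity>"
proof (rule AE_I')
  let ?W = "ball (0::real) (n + \<bar>y\<bar> + 1)"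
  define g where "g z = ennreal \<bar>f z\<bar> * indicator ?W z" for z
  define H where "H k = {ball c r | c r. ball c r \<subseteq> ?W \<and>
    of_nat k * emeasure M (ball c r) < (\<integral>\<^sup>+z\<in>ball c r. g z \<partial>M)}" for k :: nat
  have "0 < real n + \<bar>y\<bar> + 1"
    by (intro add_nonneg_pos) auto
  note W_ball = balls[OF this, of 0] loc_integrable_ball[OF \<open>loc_integrable M f\<close> this, of 0]
  show "(\<Inter>k. \<Union>(H k)) \<in> null_sets M"
    unfolding H_def g_def using W_ball sets_M by (intro Inter_heavy_balls_null) auto
  show "{x \<in> space M. \<not> (\<bar>x\<bar> < n \<longrightarrow> max_op M f x \<noteq> \<infinity>)} \<subseteq> (\<Inter>k. \<Union>(H k))"
  proof
    fix x assume "x \<in> {x \<in> space M. \<not> (\<bar>x\<bar> < n \<longrightarrow> max_op M f x \<noteq> \<infinity>)}"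
    then have "\<bar>x\<bar> < real n" "max_op M f x = \<infinity>"
      by auto
    have "x \<in> \<Union>(H k)" for k
    proof -
      obtain c r where "x \<in> ball c r" "ball c r \<subseteq> ball 0 (\<bar>x\<bar> + \<bar>y\<bar> + 1)"
        and heavy: "of_nat k * emeasure M (ball c r) < (\<integral>\<^sup>+z\<in>ball c r. ennreal \<bar>f z\<bar> \<partial>M)"
        by (rule max_op_infinite_imp_heavy_ball[OF sets_M balls finite_y \<open>max_op M f x = \<infinity>\<close>])
          (use of_nat_less_top[of k] in auto)
      have "ball c r \<subseteq> ?W"
        using \<open>ball c r \<subseteq> ball 0 (\<bar>x\<bar> + \<bar>y\<bar> + 1)\<close> \<open>\<bar>x\<bar> < real n\<close> by (auto simp: dist_real_def)
      moreover have "(\<integral>\<^sup>+z\<in>ball c r. ennreal \<bar>f z\<bar> \<partial>M) = (\<integral>\<^sup>+z\<in>ball c r. g z \<partial>M)"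
        using \<open>ball c r \<subseteq> ?W\<close> by (intro nn_integral_cong) (auto simp: g_def indicator_def)
      ultimately have "ball c r \<in> H k"
        unfolding H_def using heavy by auto
      then show ?thesis
        using \<open>x \<in> ball c r\<close> by blast
    qed
    then show "x \<in> (\<Inter>k. \<Union>(H k))"
      by blast
  qed
qed

theorem proposition6p2p1:
  fixes M :: "real measure"
  assumes "sets M = sets borel"
    and "\<And>c r. 0 < r \<Longrightarrow> 0 < emeasure M (ball c r) \<and> emeasure M (ball c r) < \<infinity>"
  shows "dichotomy_property M"
  unfolding dichotomy_property_def
proof (intro allI impI)
  fix f :: "real \<Rightarrow> real"
  assume f: "loc_integrable M f"
  show "emeasure M {x \<in> space M. max_op M f x = \<infinity>} = 0 \<or> (\<forall>x. max_op M f x = \<infinity>)"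
  proof (cases "\<forall>x. max_op M f x = \<infinity>")
    case False
    then obtain y where "max_op M f y \<noteq> \<infinity>"
      by blast
    then have "AE x in M. \<forall>n::nat. \<bar>x\<bar> < n \<longrightarrow> max_op M f x \<noteq> \<infinity>"
      unfolding AE_all_countable using max_op_finite_AE_on_ball[OF assms f] by blast
    then have "AE x in M. max_op M f x \<noteq> \<infinity>"
      by (rule AE_mp) (use reals_Archimedean2 in \<open>auto intro!: AE_I2\<close>)
    then obtain N where "{x \<in> space M. max_op M f x = \<infinity>} \<subseteq> N" "N \<in> null_sets M"
      by (rule AE_E) auto
    then have "emeasure M {x \<in> space M. max_op M f x = \<infinity>} \<le> emeasure M N"
      by (intro emeasure_mono) auto
    then show ?thesis
      using null_setsD1[OF \<open>N \<in> null_sets M\<close>] by simp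
  qed simp
qed

end
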